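(* For any uncountable analytic set $A\subseteq L(E)$, there are a nonempty perfect set $P\subseteq A$ and an infinite-dimensional subspace $V$ of $E$ such that either (i) for all $T\in P$, $V\subseteq\ker(T)$, or (ii) for all $T\in P$, $T\restriction V$ is injective.
   Context: $F$ is a countable (possibly finite) field and $E$ is a countably infinite-dimensional $F$-vector space (with a fixed basis), regarded as a discrete set. $L(E)$ is the set of all $F$-linear maps $E\to E$ with the topology inherited as a subspace of the product space $E^E$; it is an uncountable Polish space. *)

theory Defs
  imports "HOL-Analysis.Analysis"
begin

definition pointwise_discrete_top :: "('a \<Rightarrow> 'b) topology" where
  "pointwise_discrete_top = product_topology (\<lambda>_. discrete_topology UNIV) UNIV"

definition baire_space :: "(nat \<Rightarrow> nat) topology" where
  "baire_space = pointwise_discrete_top"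

definition analytic_in :: "'a topology \<Rightarrow> 'a set \<Rightarrow> bool" where
  "analytic_in X A \<longleftrightarrow> A = {} \<or> (\<exists>f. continuous_map baire_space X f \<and> f ` UNIV = A)"

definition perfect_in :: "'a topology \<Rightarrow> 'a set \<Rightarrow> bool" where
  "perfect_in X P \<longleftrightarrow> closedin X P \<and> P \<subseteq> X derived_set_of P"

definition linmaps_top :: "('f::field \<Rightarrow> 'e::ab_group_add \<Rightarrow> 'e) \<Rightarrow> ('e \<Rightarrow> 'e) topology" where
  "linmaps_top sc = subtopology pointwise_discrete_top {T. Vector_Spaces.linear sc sc T}"

end

theory Submission
  imports Defs "HOL-Library.Sublist"
begin

text \<open>
  Write \<open>A\<close> as the image of Baire space under a continuous \<open>\<phi>\<close>. Uncountably many members of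
  \<open>A\<close> have finite rank, or uncountably many have infinite rank; in either case a fusion
  argument builds a Cantor scheme of basic open sets of Baire space with uncountable images,
  each node splitting into two nested successors on which the maps differ at some point,
  together with a linearly independent sequence \<open>v\<close> such that all maps over level \<open>n\<close> kill
  \<open>v_0, ..., v_(n-1)\<close> (finite rank), resp. are injective with independent image on them
  (infinite rank).

  The next vector only has to serve the finitely many maps at chosen condensation points of
  the level, since these properties depend on finitely many values of a map and so spread to a
  whole refined node. Finitely many finite-rank maps have an infinite-dimensional common kernel;
  for finitely many maps of infinite rank, counting subset sums of a suitable finite set yields
  \<open>v\<close> with \<open>T v \<notin> span (T v_0, ..., T v_(n-1))\<close> for all of them. The branches of the
  scheme give a continuous image \<open>P\<close> of Cantor space, which is perfect, and
  \<open>V = span {v_i}\<close>.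
\<close>

section \<open>Cylinders in pointwise discrete function spaces\<close>

definition cylinder :: "'a list \<Rightarrow> (nat \<Rightarrow> 'a) set" where
  "cylinder u = {\<sigma>. \<forall>i<length u. \<sigma> i = u ! i}"

lemma mem_cylinder_map_upt [simp]: "\<tau> \<in> cylinder (map \<sigma> [0..<k]) \<longleftrightarrow> (\<forall>i<k. \<tau> i = \<sigma> i)"
  by (simp add: cylinder_def)

lemma topspace_pointwise_discrete_top [simp]: "topspace pointwise_discrete_top = UNIV"
  by (simp add: pointwise_discrete_top_def)

lemma openin_cylinder: "openin pointwise_discrete_top (cylinder u)"
proof -
  have "cylinder u = (\<Pi>\<^sub>E i\<in>UNIV. if i < length u then {u ! i} else UNIV)"
    by (auto simp: cylinder_def PiE_def Pi_def)
  moreover have "finite {i. (if i < length u then {u ! i} else UNIV) \<noteq> UNIV}"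
    by (rule finite_subset[of _ "{..<length u}"]) auto
  ultimately show ?thesis
    unfolding pointwise_discrete_top_def by (simp add: product_topology_basis)
qed

lemma openin_imp_cylinder_subset:
  assumes "openin pointwise_discrete_top W" "\<sigma> \<in> W"
  obtains k where "cylinder (map \<sigma> [0..<k]) \<subseteq> W"
proof -
  obtain X where X: "\<sigma> \<in> (\<Pi>\<^sub>E i\<in>UNIV. X i)" "(\<Pi>\<^sub>E i\<in>UNIV. X i) \<subseteq> W"
    and "finite {i. X i \<noteq> topspace (discrete_topology (UNIV :: 'a set))}"
    using product_topology_open_contains_basis[OF assms[unfolded pointwise_discrete_top_def]] by blast
  then obtain k where "{i. X i \<noteq> UNIV} \<subseteq> {..<k}" using finite_nat_bounded[of "{i. X i \<noteq> UNIV}"] by auto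
  have "cylinder (map \<sigma> [0..<k]) \<subseteq> (\<Pi>\<^sub>E i\<in>UNIV. X i)"
  proof
    fix \<tau> assume \<tau>: "\<tau> \<in> cylinder (map \<sigma> [0..<k])"
    have "\<tau> i \<in> X i" for i
    proof (cases "X i = UNIV")
      case False
      with \<open>{i. X i \<noteq> UNIV} \<subseteq> {..<k}\<close> have "i \<in> {..<k}" by (rule subsetD[OF _ CollectI])
      with \<tau> have "\<tau> i = \<sigma> i" by simp
      with X(1) show ?thesis by (simp add: PiE_iff)
    qed simp
    then show "\<tau> \<in> (\<Pi>\<^sub>E i\<in>UNIV. X i)" by (simp add: PiE_iff)
  qed
  from this X(2) show ?thesis by (rule that[OF order.trans])
qed

lemma continuous_map_discrete_iff_cylinders:
  fixes g :: "(nat \<Rightarrow> 'a) \<Rightarrow> 'b"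
  shows "continuous_map pointwise_discrete_top (discrete_topology UNIV) g \<longleftrightarrow>
    (\<forall>\<sigma>. \<exists>k. \<forall>\<tau>\<in>cylinder (map \<sigma> [0..<k]). g \<tau> = g \<sigma>)"
proof
  assume cont: "continuous_map pointwise_discrete_top (discrete_topology UNIV) g"
  show "\<forall>\<sigma>. \<exists>k. \<forall>\<tau>\<in>cylinder (map \<sigma> [0..<k]). g \<tau> = g \<sigma>"
  proof
    fix \<sigma>
    have "openin pointwise_discrete_top {\<tau>. g \<tau> = g \<sigma>}"
      using openin_continuous_map_preimage[OF cont, of "{g \<sigma>}"] by simp
    then obtain k where "cylinder (map \<sigma> [0..<k]) \<subseteq> {\<tau>. g \<tau> = g \<sigma>}"
      by (rule openin_imp_cylinder_subset) simp
    then show "\<exists>k. \<forall>\<tau>\<in>cylinder (map \<sigma> [0..<k]). g \<tau> = g \<sigma>" by blast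
  qed
next
  assume loc: "\<forall>\<sigma>. \<exists>k. \<forall>\<tau>\<in>cylinder (map \<sigma> [0..<k]). g \<tau> = g \<sigma>"
  have "openin pointwise_discrete_top {\<tau>. g \<tau> \<in> U}" for U
  proof (subst openin_subopen, intro ballI)
    fix \<sigma> assume \<sigma>: "\<sigma> \<in> {\<tau>. g \<tau> \<in> U}"
    obtain k where k: "\<forall>\<tau>\<in>cylinder (map \<sigma> [0..<k]). g \<tau> = g \<sigma>" using loc by blast
    have "cylinder (map \<sigma> [0..<k]) \<subseteq> {\<tau>. g \<tau> \<in> U}"
    proof
      fix \<tau> assume "\<tau> \<in> cylinder (map \<sigma> [0..<k])"
      with k have "g \<tau> = g \<sigma>" by blast
      with \<sigma> show "\<tau> \<in> {\<tau>. g \<tau> \<in> U}" by simp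
    qed
    moreover have "\<sigma> \<in> cylinder (map \<sigma> [0..<k])" by simp
    ultimately show "\<exists>T. openin pointwise_discrete_top T \<and> \<sigma> \<in> T \<and> T \<subseteq> {\<tau>. g \<tau> \<in> U}"
      using openin_cylinder by blast
  qed
  then show "continuous_map pointwise_discrete_top (discrete_topology UNIV) g"
    by (simp add: continuous_map_def)
qed

lemma continuous_map_pointwise_discrete_iff:
  fixes f :: "(nat \<Rightarrow> 'a) \<Rightarrow> 'b \<Rightarrow> 'c"
  shows "continuous_map pointwise_discrete_top pointwise_discrete_top f \<longleftrightarrow>
    (\<forall>\<sigma> x. \<exists>k. \<forall>\<tau>\<in>cylinder (map \<sigma> [0..<k]). f \<tau> x = f \<sigma> x)"
proof -
  have "continuous_map pointwise_discrete_top pointwise_discrete_top f \<longleftrightarrow>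
      (\<forall>x. continuous_map pointwise_discrete_top (discrete_topology UNIV) (\<lambda>\<sigma>. f \<sigma> x))"
    using continuous_map_componentwise_UNIV[of pointwise_discrete_top "\<lambda>_. discrete_topology UNIV" f]
    by (simp only: pointwise_discrete_top_def[symmetric])
  then show ?thesis
    unfolding continuous_map_discrete_iff_cylinders by blast
qed

lemma perfect_in_subtopology:
  assumes "perfect_in X P" "P \<subseteq> S"
  shows "perfect_in (subtopology X S) P"
proof -
  have "closedin (subtopology X S) P"
    using assms by (auto simp: perfect_in_def closedin_subtopology)
  moreover have "P \<subseteq> subtopology X S derived_set_of P"
    using assms by (auto simp: perfect_in_def derived_set_of_subtopology Int_absorb1)
  ultimately show ?thesis by (simp add: perfect_in_def)
qed

lemma perfect_in_range_Cantor:
  fixes f :: "(nat \<Rightarrow> bool) \<Rightarrow> 'x \<Rightarrow> 'y"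
  assumes cont: "continuous_map pointwise_discrete_top pointwise_discrete_top f"
    and flip: "\<And>b n. f (b(n := \<not> b n)) \<noteq> f b"
  shows "perfect_in pointwise_discrete_top (range f)"
  unfolding perfect_in_def
proof
  have "compact_space (pointwise_discrete_top :: (nat \<Rightarrow> bool) topology)"
    by (simp add: pointwise_discrete_top_def compact_space_product_topology compact_space_discrete_topology)
  then have "compactin pointwise_discrete_top (range f)"
    using image_compactin[OF _ cont] by (simp add: compact_space_def)
  moreover have "Hausdorff_space (pointwise_discrete_top :: ('x \<Rightarrow> 'y) topology)"
    by (simp add: pointwise_discrete_top_def Hausdorff_space_product_topology)
  ultimately show "closedin pointwise_discrete_top (range f)"
    by (simp add: compactin_imp_closedin)
  show "range f \<subseteq> pointwise_discrete_top derived_set_of range f"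
  proof (clarsimp simp: in_derived_set_of)
    fix b W assume "f b \<in> W" "openin pointwise_discrete_top W"
    then have "openin pointwise_discrete_top {b. f b \<in> W}" "b \<in> {b. f b \<in> W}"
      using openin_continuous_map_preimage[OF cont] by auto
    then obtain k where "cylinder (map b [0..<k]) \<subseteq> {b. f b \<in> W}"
      by (rule openin_imp_cylinder_subset)
    moreover have "b(k := \<not> b k) \<in> cylinder (map b [0..<k])" by simp
    ultimately have "f (b(k := \<not> b k)) \<in> W" by blast
    then show "\<exists>y. y \<noteq> f b \<and> y \<in> range f \<and> y \<in> W" using flip by blast
  qed
qed

section \<open>Fusion along a Cantor scheme\<close>

definition uncountable_node :: "((nat \<Rightarrow> 'a) \<Rightarrow> 'c) \<Rightarrow> 'c set \<Rightarrow> 'a list \<Rightarrow> bool" where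
  "uncountable_node \<phi> S u \<longleftrightarrow> uncountable (\<phi> ` cylinder u \<inter> S)"

definition condensation :: "((nat \<Rightarrow> 'a) \<Rightarrow> 'c) \<Rightarrow> 'c set \<Rightarrow> 'a list \<Rightarrow> (nat \<Rightarrow> 'a) set" where
  "condensation \<phi> S u = {\<sigma> \<in> cylinder u. \<phi> \<sigma> \<in> S \<and> (\<forall>k. uncountable_node \<phi> S (map \<sigma> [0..<k]))}"

definition separated :: "((nat \<Rightarrow> 'a) \<Rightarrow> 'x \<Rightarrow> 'y) \<Rightarrow> 'a list \<Rightarrow> 'a list \<Rightarrow> bool" where
  "separated \<phi> u w \<longleftrightarrow> (\<exists>x. \<forall>\<sigma>\<in>cylinder u. \<forall>\<tau>\<in>cylinder w. \<phi> \<sigma> x \<noteq> \<phi> \<tau> x)"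

lemma cylinder_antimono: "prefix u w \<Longrightarrow> cylinder w \<subseteq> cylinder u"
  by (auto simp: cylinder_def prefix_def nth_append)

lemma map_upt_length_cylinder: "\<sigma> \<in> cylinder u \<Longrightarrow> map \<sigma> [0..<length u] = u"
  by (auto simp: cylinder_def intro: nth_equalityI)

lemma prefix_map_upt: "m \<le> n \<Longrightarrow> prefix (map \<sigma> [0..<m]) (map \<sigma> [0..<n])"
  by (metis le_add_diff_inverse map_append prefixI upt_add_eq_append zero_le)

lemma cylinder_empty [simp]: "cylinder [] = UNIV"
  by (simp add: cylinder_def)

lemma uncountable_condensation:
  fixes \<phi> :: "(nat \<Rightarrow> 'a::countable) \<Rightarrow> 'c"
  assumes "uncountable_node \<phi> S u"
  shows "uncountable (\<phi> ` condensation \<phi> S u)"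
proof
  assume countable: "countable (\<phi> ` condensation \<phi> S u)"
  let ?thin = "\<Union>w\<in>{w. \<not> uncountable_node \<phi> S w}. \<phi> ` cylinder w \<inter> S"
  have "\<phi> ` cylinder u \<inter> S \<subseteq> \<phi> ` condensation \<phi> S u \<union> ?thin"
  proof
    fix T assume "T \<in> \<phi> ` cylinder u \<inter> S"
    then obtain \<sigma> where \<sigma>: "\<sigma> \<in> cylinder u" "\<phi> \<sigma> \<in> S" "T = \<phi> \<sigma>" by auto
    show "T \<in> \<phi> ` condensation \<phi> S u \<union> ?thin"
    proof (cases "\<forall>k. uncountable_node \<phi> S (map \<sigma> [0..<k])")
      case True
      with \<sigma> show ?thesis by (auto simp: condensation_def)
    next
      case False
      then obtain k where "\<not> uncountable_node \<phi> S (map \<sigma> [0..<k])" by blast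
      moreover have "\<sigma> \<in> cylinder (map \<sigma> [0..<k])" by simp
      ultimately have "T \<in> ?thin" using \<sigma> by blast
      then show ?thesis by blast
    qed
  qed
  moreover have "countable ?thin"
    by (rule countable_UN) (auto simp: uncountable_node_def)
  ultimately have "countable (\<phi> ` cylinder u \<inter> S)"
    using countable by (meson countable_Un countable_subset)
  with assms show False by (simp add: uncountable_node_def)
qed

lemma condensation_nonempty:
  fixes \<phi> :: "(nat \<Rightarrow> 'a::countable) \<Rightarrow> 'c"
  assumes "uncountable_node \<phi> S u"
  shows "condensation \<phi> S u \<noteq> {}"
  using uncountable_condensation[OF assms] by (intro notI) simp

lemma condensation_values_differ:
  fixes \<phi> :: "(nat \<Rightarrow> 'a::countable) \<Rightarrow> 'x \<Rightarrow> 'y"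
  assumes "uncountable_node \<phi> S u"
  obtains \<sigma>0 \<sigma>1 x where "\<sigma>0 \<in> condensation \<phi> S u" "\<sigma>1 \<in> condensation \<phi> S u" "\<phi> \<sigma>0 x \<noteq> \<phi> \<sigma>1 x"
proof -
  obtain \<sigma>0 where \<sigma>0: "\<sigma>0 \<in> condensation \<phi> S u"
    using condensation_nonempty[OF assms] by blast
  have "\<not> \<phi> ` condensation \<phi> S u \<subseteq> {\<phi> \<sigma>0}"
  proof
    assume "\<phi> ` condensation \<phi> S u \<subseteq> {\<phi> \<sigma>0}"
    then have "countable (\<phi> ` condensation \<phi> S u)" by (rule countable_subset) simp
    with uncountable_condensation[OF assms] show False by contradiction
  qed
  then obtain \<sigma>1 where \<sigma>1: "\<sigma>1 \<in> condensation \<phi> S u" "\<phi> \<sigma>1 \<noteq> \<phi> \<sigma>0"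
    by blast
  from \<sigma>1(2) have "\<phi> \<sigma>0 \<noteq> \<phi> \<sigma>1" by (rule not_sym)
  then obtain x where "\<phi> \<sigma>0 x \<noteq> \<phi> \<sigma>1 x"
    by (auto simp: fun_eq_iff)
  with \<sigma>0 \<sigma>1(1) show ?thesis by (rule that)
qed

lemma refine_node:
  assumes cont: "continuous_map pointwise_discrete_top pointwise_discrete_top \<phi>"
    and \<sigma>: "\<sigma> \<in> condensation \<phi> S u" and "finite X"
  obtains w where "strict_prefix u w" "uncountable_node \<phi> S w"
    "\<forall>\<tau>\<in>cylinder w. \<forall>x\<in>X. \<phi> \<tau> x = \<phi> \<sigma> x"
proof -
  have "\<forall>x. \<exists>k. \<forall>\<tau>\<in>cylinder (map \<sigma> [0..<k]). \<phi> \<tau> x = \<phi> \<sigma> x"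
    using cont unfolding continuous_map_pointwise_discrete_iff by blast
  then obtain K where K: "\<And>x. \<forall>\<tau>\<in>cylinder (map \<sigma> [0..<K x]). \<phi> \<tau> x = \<phi> \<sigma> x"
    by metis
  define k where "k = Max (insert (Suc (length u)) (K ` X))"
  have k: "Suc (length u) \<le> k" "\<And>x. x \<in> X \<Longrightarrow> K x \<le> k"
    using \<open>finite X\<close> by (simp_all add: k_def)
  have "map \<sigma> [0..<length u] = u"
    using \<sigma> by (simp add: condensation_def map_upt_length_cylinder)
  moreover have "prefix (map \<sigma> [0..<length u]) (map \<sigma> [0..<k])"
    using k(1) by (simp add: prefix_map_upt)
  ultimately have "prefix u (map \<sigma> [0..<k])" by simp
  moreover have "length u < length (map \<sigma> [0..<k])" using k(1) by simp
  ultimately have "strict_prefix u (map \<sigma> [0..<k])" by (auto intro: strict_prefixI)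
  moreover have "uncountable_node \<phi> S (map \<sigma> [0..<k])"
    using \<sigma> by (simp add: condensation_def)
  moreover have "\<phi> \<tau> x = \<phi> \<sigma> x" if "\<tau> \<in> cylinder (map \<sigma> [0..<k])" "x \<in> X" for \<tau> x
  proof -
    have "\<forall>i<K x. \<tau> i = \<sigma> i"
      using that k(2)[OF that(2)] by (metis mem_cylinder_map_upt order_less_le_trans)
    then have "\<tau> \<in> cylinder (map \<sigma> [0..<K x])" by simp
    with K show ?thesis by blast
  qed
  ultimately show ?thesis using that by blast
qed

lemma split_node:
  fixes \<phi> :: "(nat \<Rightarrow> 'a::countable) \<Rightarrow> 'x \<Rightarrow> 'y"
  assumes cont: "continuous_map pointwise_discrete_top pointwise_discrete_top \<phi>"
    and \<sigma>: "\<sigma> \<in> condensation \<phi> S u" and "finite X"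
  obtains w0 w1 where "strict_prefix u w0" "strict_prefix u w1"
    "uncountable_node \<phi> S w0" "uncountable_node \<phi> S w1" "separated \<phi> w0 w1"
    "\<forall>\<tau>\<in>cylinder w0 \<union> cylinder w1. \<forall>x\<in>X. \<phi> \<tau> x = \<phi> \<sigma> x"
proof -
  obtain w where w: "strict_prefix u w" "uncountable_node \<phi> S w"
    "\<forall>\<tau>\<in>cylinder w. \<forall>x\<in>X. \<phi> \<tau> x = \<phi> \<sigma> x"
    using refine_node[OF cont \<sigma> \<open>finite X\<close>] by blast
  obtain \<sigma>0 \<sigma>1 x where \<sigma>0: "\<sigma>0 \<in> condensation \<phi> S w" and \<sigma>1: "\<sigma>1 \<in> condensation \<phi> S w"
    and x: "\<phi> \<sigma>0 x \<noteq> \<phi> \<sigma>1 x"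
    using condensation_values_differ[OF w(2)] by blast
  obtain w0 where w0: "strict_prefix w w0" "uncountable_node \<phi> S w0"
    "\<forall>\<tau>\<in>cylinder w0. \<forall>y\<in>{x}. \<phi> \<tau> y = \<phi> \<sigma>0 y"
    using refine_node[OF cont \<sigma>0, of "{x}"] by blast
  obtain w1 where w1: "strict_prefix w w1" "uncountable_node \<phi> S w1"
    "\<forall>\<tau>\<in>cylinder w1. \<forall>y\<in>{x}. \<phi> \<tau> y = \<phi> \<sigma>1 y"
    using refine_node[OF cont \<sigma>1, of "{x}"] by blast
  show ?thesis
  proof (rule that)
    show "strict_prefix u w0" using w(1) w0(1) by (rule prefix_order.less_trans)
    show "strict_prefix u w1" using w(1) w1(1) by (rule prefix_order.less_trans)
    show "uncountable_node \<phi> S w0" "uncountable_node \<phi> S w1" by fact+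
    show "separated \<phi> w0 w1"
      unfolding separated_def
    proof (intro exI ballI)
      fix \<tau>0 \<tau>1 assume "\<tau>0 \<in> cylinder w0" "\<tau>1 \<in> cylinder w1"
      then have "\<phi> \<tau>0 x = \<phi> \<sigma>0 x" "\<phi> \<tau>1 x = \<phi> \<sigma>1 x" using w0(3) w1(3) by blast+
      with x show "\<phi> \<tau>0 x \<noteq> \<phi> \<tau>1 x" by simp
    qed
    have "cylinder w0 \<union> cylinder w1 \<subseteq> cylinder w"
      using w0(1) w1(1) by (auto dest!: prefix_order.less_imp_le cylinder_antimono)
    with w(3) show "\<forall>\<tau>\<in>cylinder w0 \<union> cylinder w1. \<forall>x\<in>X. \<phi> \<tau> x = \<phi> \<sigma> x" by blast
  qed
qed

definition scheme_level ::
    "((nat \<Rightarrow> 'a) \<Rightarrow> 'x \<Rightarrow> 'y) \<Rightarrow> ('x \<Rightarrow> 'y) set \<Rightarrow> (('x \<Rightarrow> 'y) \<Rightarrow> 'x set \<Rightarrow> bool) \<Rightarrow>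
      nat \<Rightarrow> 'x set \<Rightarrow> (bool list \<Rightarrow> 'a list) \<Rightarrow> bool" where
  "scheme_level \<phi> S M n V U \<longleftrightarrow>
    (\<forall>s::bool list. length s = n \<longrightarrow> uncountable_node \<phi> S (U s) \<and> (\<forall>\<sigma>\<in>cylinder (U s). M (\<phi> \<sigma>) V))"

lemma scheme_level_0:
  assumes "S \<subseteq> range \<phi>" "uncountable S" "\<And>T. M T {}"
  shows "scheme_level \<phi> S M 0 {} (\<lambda>_. [])"
proof -
  have "\<phi> ` cylinder [] \<inter> S = S" using assms(1) by auto
  with assms(2,3) show ?thesis
    by (simp add: scheme_level_def uncountable_node_def)
qed

lemma split_level:
  fixes \<phi> :: "(nat \<Rightarrow> 'a::countable) \<Rightarrow> 'x \<Rightarrow> 'y"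
  assumes cont: "continuous_map pointwise_discrete_top pointwise_discrete_top \<phi>"
    and \<sigma>: "\<And>s::bool list. length s = n \<Longrightarrow> \<sigma> s \<in> condensation \<phi> S (U s)" and "finite X"
  obtains U' where
    "\<forall>t. length t = Suc n \<longrightarrow> uncountable_node \<phi> S (U' t) \<and>
      (\<forall>\<tau>\<in>cylinder (U' t). \<forall>x\<in>X. \<phi> \<tau> x = \<phi> (\<sigma> (butlast t)) x)"
    "\<forall>(s::bool list) c. length s = n \<longrightarrow> strict_prefix (U s) (U' (s @ [c]))"
    "\<forall>s::bool list. length s = n \<longrightarrow> separated \<phi> (U' (s @ [True])) (U' (s @ [False]))"
proof -
  have "\<exists>w0 w1. strict_prefix (U s) w0 \<and> strict_prefix (U s) w1 \<and>
      uncountable_node \<phi> S w0 \<and> uncountable_node \<phi> S w1 \<and> separated \<phi> w0 w1 \<and>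
      (\<forall>\<tau>\<in>cylinder w0 \<union> cylinder w1. \<forall>x\<in>X. \<phi> \<tau> x = \<phi> (\<sigma> s) x)" if "length s = n" for s
    by (rule split_node[OF cont \<sigma>[OF that] \<open>finite X\<close>]) blast
  then obtain w0 w1 where w: "\<And>s. length s = n \<Longrightarrow> strict_prefix (U s) (w0 s) \<and>
      strict_prefix (U s) (w1 s) \<and> uncountable_node \<phi> S (w0 s) \<and> uncountable_node \<phi> S (w1 s) \<and>
      separated \<phi> (w0 s) (w1 s) \<and>
      (\<forall>\<tau>\<in>cylinder (w0 s) \<union> cylinder (w1 s). \<forall>x\<in>X. \<phi> \<tau> x = \<phi> (\<sigma> s) x)"
    by metis
  define U' where "U' t = (if last t then w0 (butlast t) else w1 (butlast t))" for t
  show ?thesis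
  proof (rule that)
    show "\<forall>t. length t = Suc n \<longrightarrow> uncountable_node \<phi> S (U' t) \<and>
        (\<forall>\<tau>\<in>cylinder (U' t). \<forall>x\<in>X. \<phi> \<tau> x = \<phi> (\<sigma> (butlast t)) x)"
    proof (intro allI impI)
      fix t :: "bool list" assume "length t = Suc n"
      then have "length (butlast t) = n" by simp
      then show "uncountable_node \<phi> S (U' t) \<and>
          (\<forall>\<tau>\<in>cylinder (U' t). \<forall>x\<in>X. \<phi> \<tau> x = \<phi> (\<sigma> (butlast t)) x)"
        using w[of "butlast t"] by (simp add: U'_def)
    qed
    show "\<forall>(s::bool list) c. length s = n \<longrightarrow> strict_prefix (U s) (U' (s @ [c]))"
    proof (intro allI impI)
      fix s :: "bool list" and c assume "length s = n"
      with w show "strict_prefix (U s) (U' (s @ [c]))" by (cases c) (simp_all add: U'_def)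
    qed
    show "\<forall>s::bool list. length s = n \<longrightarrow> separated \<phi> (U' (s @ [True])) (U' (s @ [False]))"
      using w by (simp add: U'_def)
  qed
qed

lemma scheme_step:
  fixes \<phi> :: "(nat \<Rightarrow> 'a::countable) \<Rightarrow> 'x \<Rightarrow> 'y"
  assumes cont: "continuous_map pointwise_discrete_top pointwise_discrete_top \<phi>"
    and M_local: "\<And>T \<tau> V. M T V \<Longrightarrow> \<forall>x\<in>V. \<tau> x = T x \<Longrightarrow> M \<tau> V"
    and M_extend: "\<And>F. finite F \<Longrightarrow> F \<noteq> {} \<Longrightarrow> F \<subseteq> S \<Longrightarrow> \<forall>T\<in>F. M T V \<Longrightarrow>
      \<exists>v. N v \<and> (\<forall>T\<in>F. M T (insert v V))"
    and "finite V" and level: "scheme_level \<phi> S M n V U"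
  obtains v U' where "N v" "scheme_level \<phi> S M (Suc n) (insert v V) U'"
    "\<forall>(s::bool list) c. length s = n \<longrightarrow> strict_prefix (U s) (U' (s @ [c]))"
    "\<forall>s::bool list. length s = n \<longrightarrow> separated \<phi> (U' (s @ [True])) (U' (s @ [False]))"
proof -
  have "\<exists>\<sigma>. \<sigma> \<in> condensation \<phi> S (U s)" if "length s = n" for s
  proof -
    from level that have "uncountable_node \<phi> S (U s)" by (simp add: scheme_level_def)
    then show ?thesis using condensation_nonempty by blast
  qed
  then obtain \<sigma> where \<sigma>: "\<And>s. length s = n \<Longrightarrow> \<sigma> s \<in> condensation \<phi> S (U s)"
    by metis
  define F where "F = (\<lambda>s. \<phi> (\<sigma> s)) ` {s. length s = n}"
  have "finite F"
    unfolding F_def using finite_lists_length_eq[of "UNIV :: bool set" n] by simp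
  moreover have "F \<noteq> {}"
    unfolding F_def by (metis (mono_tags) empty_Collect_eq image_is_empty length_replicate)
  moreover have "F \<subseteq> S"
    using \<sigma> by (auto simp: F_def condensation_def)
  moreover have "\<forall>T\<in>F. M T V"
    using \<sigma> level by (auto simp: F_def condensation_def scheme_level_def)
  ultimately have "\<exists>v. N v \<and> (\<forall>T\<in>F. M T (insert v V))" by (rule M_extend)
  then obtain v where "N v" and v: "\<forall>T\<in>F. M T (insert v V)" by blast
  from \<open>finite V\<close> have "finite (insert v V)" by simp
  obtain U' where U': "\<forall>t. length t = Suc n \<longrightarrow> uncountable_node \<phi> S (U' t) \<and>
      (\<forall>\<tau>\<in>cylinder (U' t). \<forall>x\<in>insert v V. \<phi> \<tau> x = \<phi> (\<sigma> (butlast t)) x)"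
    and nested: "\<forall>(s::bool list) c. length s = n \<longrightarrow> strict_prefix (U s) (U' (s @ [c]))"
    and separated: "\<forall>s::bool list. length s = n \<longrightarrow> separated \<phi> (U' (s @ [True])) (U' (s @ [False]))"
    by (rule split_level[OF cont \<sigma> \<open>finite (insert v V)\<close>])
  have "scheme_level \<phi> S M (Suc n) (insert v V) U'"
    unfolding scheme_level_def
  proof (intro allI impI conjI ballI)
    fix t :: "bool list" and \<tau> assume "length t = Suc n"
    with U' show "uncountable_node \<phi> S (U' t)" by blast
    assume "\<tau> \<in> cylinder (U' t)"
    with U' \<open>length t = Suc n\<close> have "\<forall>x\<in>insert v V. \<phi> \<tau> x = \<phi> (\<sigma> (butlast t)) x" by blast
    moreover have "M (\<phi> (\<sigma> (butlast t))) (insert v V)"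
      using v \<open>length t = Suc n\<close> by (simp add: F_def)
    ultimately show "M (\<phi> \<tau>) (insert v V)" using M_local by blast
  qed
  from \<open>N v\<close> this nested separated show ?thesis by (rule that)
qed

lemma scheme_exists:
  fixes \<phi> :: "(nat \<Rightarrow> 'a::countable) \<Rightarrow> 'x \<Rightarrow> 'y"
  assumes cont: "continuous_map pointwise_discrete_top pointwise_discrete_top \<phi>"
    and "S \<subseteq> range \<phi>" "uncountable S"
    and M_empty: "\<And>T. M T {}"
    and M_local: "\<And>T \<tau> V. M T V \<Longrightarrow> \<forall>x\<in>V. \<tau> x = T x \<Longrightarrow> M \<tau> V"
    and M_extend: "\<And>V F. finite V \<Longrightarrow> finite F \<Longrightarrow> F \<noteq> {} \<Longrightarrow> F \<subseteq> S \<Longrightarrow> \<forall>T\<in>F. M T V \<Longrightarrow>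
      \<exists>v. N V v \<and> (\<forall>T\<in>F. M T (insert v V))"
  obtains vseq U where
    "\<forall>n. scheme_level \<phi> S M n (vseq ` {..<n}) (U n)"
    "\<forall>n. N (vseq ` {..<n}) (vseq n)"
    "\<forall>n (s::bool list) c. length s = n \<longrightarrow> strict_prefix (U n s) (U (Suc n) (s @ [c]))"
    "\<forall>n (s::bool list). length s = n \<longrightarrow> separated \<phi> (U (Suc n) (s @ [True])) (U (Suc n) (s @ [False]))"
proof -
  define P where "P n st \<longleftrightarrow> length (fst st) = n \<and> scheme_level \<phi> S M n (set (fst st)) (snd st)"
    for n and st :: "'x list \<times> (bool list \<Rightarrow> 'a list)"
  define Q where "Q n st st' \<longleftrightarrow> (\<exists>v. fst st' = fst st @ [v] \<and> N (set (fst st)) v) \<and>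
      (\<forall>s c. length s = n \<longrightarrow> strict_prefix (snd st s) (snd st' (s @ [c]))) \<and>
      (\<forall>s. length s = n \<longrightarrow> separated \<phi> (snd st' (s @ [True])) (snd st' (s @ [False])))"
    for n and st st' :: "'x list \<times> (bool list \<Rightarrow> 'a list)"
  have "P 0 ([], \<lambda>_. [])"
    using scheme_level_0[of S \<phi> M] assms(2,3) M_empty by (simp add: P_def)
  moreover have "\<exists>st'. P (Suc n) st' \<and> Q n st st'" if "P n st" for n st
  proof -
    obtain vs U where st: "st = (vs, U)" by fastforce
    with that have len: "length vs = n" and level: "scheme_level \<phi> S M n (set vs) U"
      by (simp_all add: P_def)
    obtain v U' where "N (set vs) v" "scheme_level \<phi> S M (Suc n) (insert v (set vs)) U'"
      "\<forall>s c. length s = n \<longrightarrow> strict_prefix (U s) (U' (s @ [c]))"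
      "\<forall>s. length s = n \<longrightarrow> separated \<phi> (U' (s @ [True])) (U' (s @ [False]))"
      by (rule scheme_step[OF cont M_local M_extend[OF finite_set] finite_set level])
    with len have "P (Suc n) (vs @ [v], U') \<and> Q n st (vs @ [v], U')"
      by (simp add: P_def Q_def st)
    then show ?thesis by blast
  qed
  ultimately obtain g where g: "\<And>n. P n (g n)" "\<And>n. Q n (g n) (g (Suc n))"
    using dependent_nat_choice[of P Q] by blast
  define vseq where "vseq n = fst (g (Suc n)) ! n" for n
  have step: "fst (g (Suc n)) = fst (g n) @ [vseq n] \<and> N (set (fst (g n))) (vseq n)" for n
  proof -
    obtain v where "fst (g (Suc n)) = fst (g n) @ [v]" "N (set (fst (g n))) v"
      using g(2)[of n] by (auto simp: Q_def)
    moreover have "length (fst (g n)) = n" using g(1)[of n] by (simp add: P_def)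
    ultimately show ?thesis by (simp add: vseq_def nth_append)
  qed
  have "fst (g n) = map vseq [0..<n]" for n
    by (induction n) (use g(1)[of 0] step in \<open>simp_all add: P_def\<close>)
  then have vs: "set (fst (g n)) = vseq ` {..<n}" for n
    by (simp add: atLeast0LessThan)
  show ?thesis
  proof (rule that[of vseq "\<lambda>n. snd (g n)"])
    show "\<forall>n. scheme_level \<phi> S M n (vseq ` {..<n}) (snd (g n))"
      using g(1) by (simp add: P_def vs)
    show "\<forall>n. N (vseq ` {..<n}) (vseq n)"
      using step by (simp add: vs)
    show "\<forall>n (s::bool list) c. length s = n \<longrightarrow> strict_prefix (snd (g n) s) (snd (g (Suc n)) (s @ [c]))"
      using g(2) by (simp add: Q_def)
    show "\<forall>n (s::bool list). length s = n \<longrightarrow>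
        separated \<phi> (snd (g (Suc n)) (s @ [True])) (snd (g (Suc n)) (s @ [False]))"
      using g(2) by (simp add: Q_def)
  qed
qed

lemma limit_in_cylinders:
  assumes chain: "\<And>n. strict_prefix (w n) (w (Suc n))"
  shows "(\<lambda>i. w (Suc i) ! i) \<in> cylinder (w n)"
proof -
  have prefix: "prefix (w m) (w n)" if "m \<le> n" for m n
    using that
  proof (induction rule: dec_induct)
    case (step k)
    with chain[of k] show ?case
      by (blast intro: prefix_order.trans prefix_order.less_imp_le)
  qed simp
  have length: "n \<le> length (w n)" for n
  proof (induction n)
    case (Suc n)
    with prefix_length_less[OF chain[of n]] show ?case by simp
  qed simp
  have nth: "w m ! i = w n ! i" if "m \<le> n" "i < length (w m)" for m n i
    using prefix[OF that(1)] that(2) by (auto simp: prefix_def nth_append)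
  show ?thesis
    unfolding cylinder_def
  proof (intro CollectI allI impI)
    fix i assume i: "i < length (w n)"
    have "w (Suc i) ! i = w (max n (Suc i)) ! i"
      using length[of "Suc i"] by (intro nth) simp_all
    also have "\<dots> = w n ! i"
      using i by (intro nth[symmetric]) simp_all
    finally show "w (Suc i) ! i = w n ! i" .
  qed
qed

definition branch :: "(nat \<Rightarrow> bool list \<Rightarrow> 'a list) \<Rightarrow> (nat \<Rightarrow> bool) \<Rightarrow> nat \<Rightarrow> 'a" where
  "branch U b i = U (Suc i) (map b [0..<Suc i]) ! i"

lemma branch_in_cylinder:
  assumes "\<forall>n (s::bool list) c. length s = n \<longrightarrow> strict_prefix (U n s) (U (Suc n) (s @ [c]))"
  shows "branch U b \<in> cylinder (U n (map b [0..<n]))"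
proof -
  have "strict_prefix (U m (map b [0..<m])) (U (Suc m) (map b [0..<Suc m]))" for m
    using assms[rule_format, of "map b [0..<m]" m "b m"] by simp
  then show ?thesis
    unfolding branch_def by (rule limit_in_cylinders)
qed

lemma continuous_map_branch:
  "continuous_map pointwise_discrete_top pointwise_discrete_top (branch U)"
  unfolding continuous_map_pointwise_discrete_iff
proof (intro allI exI ballI)
  fix b i and b' :: "nat \<Rightarrow> bool" assume "b' \<in> cylinder (map b [0..<Suc i])"
  then have "\<forall>j<Suc i. b' j = b j" by (simp only: mem_cylinder_map_upt)
  then have "map b' [0..<Suc i] = map b [0..<Suc i]" by (simp del: upt_Suc)
  then show "branch U b' i = branch U b i" by (simp only: branch_def)
qed

(* M T V is the property to be kept for the maps T and the vectors V chosen so far, depending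
   only on the values of T on V; N V v is the constraint on the next vector v. *)
lemma perfect_subset_by_fusion:
  fixes \<phi> :: "(nat \<Rightarrow> 'a::countable) \<Rightarrow> 'x \<Rightarrow> 'y"
  assumes cont: "continuous_map pointwise_discrete_top pointwise_discrete_top \<phi>"
    and "S \<subseteq> range \<phi>" "uncountable S"
    and "\<And>T. M T {}"
    and "\<And>T \<tau> V. M T V \<Longrightarrow> \<forall>x\<in>V. \<tau> x = T x \<Longrightarrow> M \<tau> V"
    and "\<And>V F. finite V \<Longrightarrow> finite F \<Longrightarrow> F \<noteq> {} \<Longrightarrow> F \<subseteq> S \<Longrightarrow> \<forall>T\<in>F. M T V \<Longrightarrow>
      \<exists>v. N V v \<and> (\<forall>T\<in>F. M T (insert v V))"
  shows "\<exists>P vseq. P \<noteq> {} \<and> perfect_in pointwise_discrete_top P \<and> P \<subseteq> range \<phi> \<and>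
    (\<forall>T\<in>P. \<forall>n. M T (vseq ` {..<n})) \<and> (\<forall>n::nat. N (vseq ` {..<n}) (vseq n))"
proof -
  obtain vseq U where level: "\<forall>n. scheme_level \<phi> S M n (vseq ` {..<n}) (U n)"
    and N: "\<forall>n. N (vseq ` {..<n}) (vseq n)"
    and nested: "\<forall>n (s::bool list) c. length s = n \<longrightarrow> strict_prefix (U n s) (U (Suc n) (s @ [c]))"
    and separated: "\<forall>n (s::bool list). length s = n \<longrightarrow>
      separated \<phi> (U (Suc n) (s @ [True])) (U (Suc n) (s @ [False]))"
    by (rule scheme_exists[OF assms])
  note in_cylinder = branch_in_cylinder[OF nested]
  have flip: "(\<phi> \<circ> branch U) (b(n := \<not> b n)) \<noteq> (\<phi> \<circ> branch U) b" for b n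
  proof -
    define b' where "b' = b(n := \<not> b n)"
    let ?s = "map b [0..<n]"
    have "map b' [0..<n] = ?s" by (simp add: b'_def)
    then have "branch U b \<in> cylinder (U (Suc n) (?s @ [b n]))"
      and "branch U b' \<in> cylinder (U (Suc n) (?s @ [\<not> b n]))"
      using in_cylinder[of b "Suc n"] in_cylinder[of b' "Suc n"] by (simp_all add: b'_def)
    moreover obtain x where "\<forall>\<sigma>\<in>cylinder (U (Suc n) (?s @ [True])).
        \<forall>\<tau>\<in>cylinder (U (Suc n) (?s @ [False])). \<phi> \<sigma> x \<noteq> \<phi> \<tau> x"
      using separated[rule_format, of ?s n] by (auto simp: separated_def)
    ultimately have "\<phi> (branch U b) x \<noteq> \<phi> (branch U b') x"
      by (cases "b n") (auto dest: not_sym)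
    then show ?thesis by (auto simp: b'_def)
  qed
  show ?thesis
  proof (intro exI conjI)
    show "range (\<phi> \<circ> branch U) \<noteq> {}" "range (\<phi> \<circ> branch U) \<subseteq> range \<phi>" by auto
    show "perfect_in pointwise_discrete_top (range (\<phi> \<circ> branch U))"
      using continuous_map_compose[OF continuous_map_branch cont] flip
      by (rule perfect_in_range_Cantor)
    show "\<forall>T\<in>range (\<phi> \<circ> branch U). \<forall>n. M T (vseq ` {..<n})"
    proof (intro ballI allI)
      fix T n assume "T \<in> range (\<phi> \<circ> branch U)"
      then obtain b where "T = \<phi> (branch U b)" by auto
      moreover have "\<forall>\<sigma>\<in>cylinder (U n (map b [0..<n])). M (\<phi> \<sigma>) (vseq ` {..<n})"
        using level unfolding scheme_level_def by (metis length_map length_upt minus_nat.diff_0)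
      ultimately show "M T (vseq ` {..<n})" using in_cylinder[of b n] by blast
    qed
    show "\<forall>n. N (vseq ` {..<n}) (vseq n)" by (rule N)
  qed
qed

section \<open>Finite-rank maps\<close>

definition finite_rank :: "('a::field \<Rightarrow> 'b::ab_group_add \<Rightarrow> 'b) \<Rightarrow> ('b \<Rightarrow> 'b) \<Rightarrow> bool" where
  "finite_rank sc T \<longleftrightarrow> (\<exists>G. finite G \<and> range T \<subseteq> module.span sc G)"

context vector_space
begin

lemma independent_Un_imp_span_Int_zero:
  assumes "independent (A \<union> B)" "A \<inter> B = {}" "x \<in> span A" "x \<in> span B"
  shows "x = 0"
proof -
  have "representation A x = representation (A \<union> B) x"
    using assms(1,3) by (simp add: representation_extend)
  moreover have "representation B x = representation (A \<union> B) x"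
    using assms(1,4) by (simp add: representation_extend)
  ultimately have "representation A x b = 0" for b
    using representation_ne_zero[of A x b] representation_ne_zero[of B x b] assms(2) by auto
  moreover have "independent A"
    using assms(1) by (rule independent_mono) simp
  ultimately show "x = 0"
    using sum_nonzero_representation_eq[of A x] assms(3) by simp
qed

lemma card_le_if_inj_on_span:
  assumes lin: "Vector_Spaces.linear scale scale T" and "independent X" "inj_on T (span X)"
    and "finite G" "range T \<subseteq> span G"
  shows "card X \<le> card G"
proof -
  interpret T: Vector_Spaces.linear scale scale T by (rule lin)
  have "independent (T ` X)" using assms(2,3) by (rule T.independent_injective_image)
  moreover have "T ` X \<subseteq> span G" using assms(5) by auto
  ultimately have "card (T ` X) \<le> card G" using independent_span_bound[OF assms(4)] by blast
  moreover have "card (T ` X) = card X"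
    using inj_on_subset[OF assms(3) span_superset] by (rule card_image)
  ultimately show ?thesis by simp
qed

lemma infinite_independent_in_kernel:
  assumes B: "independent B" "infinite B"
    and lin: "Vector_Spaces.linear scale scale T" and "finite_rank scale T"
  obtains B' where "B' \<subseteq> span B \<inter> {v. T v = 0}" "independent B'" "infinite B'"
proof -
  interpret T: Vector_Spaces.linear scale scale T by (rule lin)
  obtain G where G: "finite G" "range T \<subseteq> span G"
    using \<open>finite_rank scale T\<close> by (auto simp: finite_rank_def)
  obtain C where C: "C \<subseteq> span B \<inter> {v. T v = 0}" "independent C" "span B \<inter> {v. T v = 0} \<subseteq> span C"
    using maximal_independent_subset by blast
  show ?thesis
  proof (cases "finite C")
    case False
    with C that show ?thesis by blast
  next
    case True
    \<comment> \<open>Extend \<open>C\<close> by part of a large finite \<open>X \<subseteq> B\<close>; \<open>T\<close> is injective on the span of the new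
      part, whose size is then bounded by \<open>card G\<close>.\<close>
    obtain X where X: "X \<subseteq> B" "finite X" "card X = card C + card G + 1"
      using infinite_arbitrarily_large[OF B(2)] by blast
    have "independent X" using B(1) X(1) by (rule independent_mono)
    obtain D where D: "C \<subseteq> D" "D \<subseteq> C \<union> X" "independent D" "C \<union> X \<subseteq> span D"
      using maximal_independent_subset_extend[of C "C \<union> X"] C(2) by blast
    have "finite D" using D(2) True X(2) finite_subset by blast
    have "card X \<le> card D"
      using independent_span_bound[OF \<open>finite D\<close> \<open>independent X\<close>] D(4) by auto
    define X' where "X' = D - C"
    have "card D \<le> card C + card X'"
      using card_Un_le[of C X'] D(1) by (simp add: X'_def Un_absorb1)
    have "span X' \<subseteq> span B"
      using D(2) X(1) by (intro span_mono) (auto simp: X'_def)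
    have inj: "inj_on T (span X')"
      unfolding T.inj_on_iff_eq_0[OF subspace_span]
    proof (intro ballI impI)
      fix x assume "x \<in> span X'" "T x = 0"
      moreover from this \<open>span X' \<subseteq> span B\<close> C(3) have "x \<in> span C" by blast
      moreover have "independent (C \<union> X')" using D(1,3) by (simp add: X'_def Un_absorb1)
      ultimately show "x = 0" by (intro independent_Un_imp_span_Int_zero[of C X']) (auto simp: X'_def)
    qed
    have "independent X'" using D(3) by (rule independent_mono) (simp add: X'_def)
    then have "card X' \<le> card G" by (rule card_le_if_inj_on_span[OF lin _ inj G])
    with \<open>card X \<le> card D\<close> \<open>card D \<le> card C + card X'\<close> X(3) show ?thesis by linarith
  qed
qed

lemma infinite_independent_in_common_kernel:
  assumes "finite F" "\<And>T. T \<in> F \<Longrightarrow> Vector_Spaces.linear scale scale T"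
    "\<And>T. T \<in> F \<Longrightarrow> finite_rank scale T" "independent B" "infinite B"
  shows "\<exists>B'. B' \<subseteq> {v. \<forall>T\<in>F. T v = 0} \<and> independent B' \<and> infinite B'"
  using assms(1-3)
proof (induction F rule: finite_induct)
  case empty
  show ?case using assms(4,5) by (intro exI[of _ B]) simp
next
  case (insert T F)
  from insert.prems have "\<exists>B1. B1 \<subseteq> {v. \<forall>S\<in>F. S v = 0} \<and> independent B1 \<and> infinite B1"
    by (intro insert.IH) simp_all
  then obtain B1 where B1: "B1 \<subseteq> {v. \<forall>S\<in>F. S v = 0}" "independent B1" "infinite B1"
    by blast
  obtain B2 where B2: "B2 \<subseteq> span B1 \<inter> {v. T v = 0}" "independent B2" "infinite B2"
    using infinite_independent_in_kernel[OF B1(2,3) insert.prems[OF insertI1]] by blast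
  have "span B1 \<subseteq> {v. \<forall>S\<in>F. S v = 0}"
  proof (intro subsetI CollectI ballI)
    fix x S assume "x \<in> span B1" "S \<in> F"
    interpret S: Vector_Spaces.linear scale scale S using insert.prems(1) \<open>S \<in> F\<close> by simp
    show "S x = 0"
      by (rule S.eq_0_on_span[OF _ \<open>x \<in> span B1\<close>]) (use B1(1) \<open>S \<in> F\<close> in blast)
  qed
  with B2 show ?case by blast
qed

lemma exists_not_in_span_in_common_kernel:
  assumes "finite V" "finite F" "\<And>T. T \<in> F \<Longrightarrow> Vector_Spaces.linear scale scale T"
    "\<And>T. T \<in> F \<Longrightarrow> finite_rank scale T" "independent B" "infinite B"
  shows "\<exists>v. v \<notin> span V \<and> (\<forall>T\<in>F. T v = 0)"
proof -
  obtain B' where B': "B' \<subseteq> {v. \<forall>T\<in>F. T v = 0}" "independent B'" "infinite B'"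
    using infinite_independent_in_common_kernel[OF assms(2-6)] by blast
  have "\<not> B' \<subseteq> span V"
    using independent_span_bound[OF \<open>finite V\<close> B'(2)] B'(3) by blast
  with B'(1) show ?thesis by blast
qed

end

section \<open>Maps of infinite rank\<close>

(* The family (T y) indexed by y \<in> Y, not merely the set T ` Y, is linearly independent
   modulo span H; in particular T is injective on Y. *)
definition image_independent_mod ::
    "('a::field \<Rightarrow> 'b::ab_group_add \<Rightarrow> 'b) \<Rightarrow> ('b \<Rightarrow> 'b) \<Rightarrow> 'b set \<Rightarrow> 'b set \<Rightarrow> bool" where
  "image_independent_mod sc T H Y \<longleftrightarrow>
    (\<forall>c. (\<Sum>y\<in>Y. sc (c y) (T y)) \<in> module.span sc H \<longrightarrow> (\<forall>y\<in>Y. c y = 0))"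

context vector_space
begin

lemma image_independent_mod_insert:
  assumes Y: "image_independent_mod scale T H Y" "finite Y" and y: "T y \<notin> span (H \<union> T ` Y)"
  shows "image_independent_mod scale T H (insert y Y)"
  unfolding image_independent_mod_def
proof (intro allI impI)
  fix c assume c: "(\<Sum>z\<in>insert y Y. c z *s T z) \<in> span H"
  have "y \<notin> Y"
  proof
    assume "y \<in> Y"
    then have "T y \<in> span (H \<union> T ` Y)" by (simp add: span_base)
    with y show False by contradiction
  qed
  with Y(2) have sum_insert: "(\<Sum>z\<in>insert y Y. c z *s T z) = c y *s T y + (\<Sum>z\<in>Y. c z *s T z)"
    by simp
  have rest: "(\<Sum>z\<in>Y. c z *s T z) \<in> span (H \<union> T ` Y)"
    by (rule span_sum, rule span_scale, rule span_base) auto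
  have "(\<Sum>z\<in>insert y Y. c z *s T z) \<in> span (H \<union> T ` Y)"
    using c span_mono[of H "H \<union> T ` Y"] by blast
  then have "(\<Sum>z\<in>insert y Y. c z *s T z) - (\<Sum>z\<in>Y. c z *s T z) \<in> span (H \<union> T ` Y)"
    using rest by (rule span_diff)
  then have "c y *s T y \<in> span (H \<union> T ` Y)" by (simp add: sum_insert)
  have "c y = 0"
  proof (rule ccontr)
    assume "c y \<noteq> 0"
    from \<open>c y *s T y \<in> span (H \<union> T ` Y)\<close>
    have "inverse (c y) *s (c y *s T y) \<in> span (H \<union> T ` Y)" by (rule span_scale)
    with \<open>c y \<noteq> 0\<close> y show False by simp
  qed
  with c have "(\<Sum>z\<in>Y. c z *s T z) \<in> span H" by (simp add: sum_insert)
  with Y(1) have "\<forall>z\<in>Y. c z = 0" by (simp add: image_independent_mod_def)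
  with \<open>c y = 0\<close> show "\<forall>z\<in>insert y Y. c z = 0" by simp
qed

lemma image_independent_mod_exists:
  assumes "\<not> finite_rank scale T" "finite H"
  shows "\<exists>Y. finite Y \<and> card Y = k \<and> image_independent_mod scale T H Y"
proof (induction k)
  case 0
  show ?case by (intro exI[of _ "{}"]) (simp add: image_independent_mod_def)
next
  case (Suc k)
  then obtain Y where Y: "finite Y" "card Y = k" "image_independent_mod scale T H Y"
    by blast
  have "finite (H \<union> T ` Y)" using assms(2) Y(1) by simp
  with assms(1) have "\<not> range T \<subseteq> span (H \<union> T ` Y)"
    unfolding finite_rank_def by blast
  then obtain y where y: "T y \<notin> span (H \<union> T ` Y)" by blast
  then have "y \<notin> Y" by (auto intro: span_base)
  with Y image_independent_mod_insert[OF Y(3,1) y] show ?case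
    by (intro exI[of _ "insert y Y"]) simp
qed

lemma image_independent_mod_sum_inj:
  assumes lin: "Vector_Spaces.linear scale scale T"
    and "finite X" "Y \<subseteq> X" and Y: "image_independent_mod scale T H Y"
    and J: "J \<subseteq> X" "T (\<Sum>x\<in>J. x) \<in> span H" and J': "J' \<subseteq> X" "T (\<Sum>x\<in>J'. x) \<in> span H"
    and "J - Y = J' - Y"
  shows "J = J'"
proof -
  interpret T: Vector_Spaces.linear scale scale T by (rule lin)
  define c where "c y = (if y \<in> J then 1 else 0) - (if y \<in> J' then 1 else (0::'a))" for y
  have sum_as_scaled: "(\<Sum>x\<in>K. x) = (\<Sum>x\<in>X. (if x \<in> K then 1 else (0::'a)) *s x)" if "K \<subseteq> X" for K
  proof -
    have "(\<Sum>x\<in>X. (if x \<in> K then 1 else (0::'a)) *s x) = (\<Sum>x\<in>X. if x \<in> K then x else 0)"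
      by (rule sum.cong) auto
    also have "\<dots> = (\<Sum>x\<in>K. x)"
      using \<open>finite X\<close> that by (simp add: sum.If_cases Int_absorb1)
    finally show ?thesis by simp
  qed
  have "(\<Sum>x\<in>J. x) - (\<Sum>x\<in>J'. x) = (\<Sum>x\<in>X. c x *s x)"
    unfolding sum_as_scaled[OF J(1)] sum_as_scaled[OF J'(1)] c_def
    by (simp add: sum_subtractf scale_left_diff_distrib)
  also have "\<dots> = (\<Sum>y\<in>Y. c y *s y)"
    using \<open>J - Y = J' - Y\<close> by (intro sum.mono_neutral_right[OF \<open>finite X\<close> \<open>Y \<subseteq> X\<close>]) (auto simp: c_def)
  finally have "T ((\<Sum>x\<in>J. x) - (\<Sum>x\<in>J'. x)) = (\<Sum>y\<in>Y. c y *s T y)"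
    by (simp add: T.sum T.scale)
  moreover have "T ((\<Sum>x\<in>J. x) - (\<Sum>x\<in>J'. x)) \<in> span H"
    using span_diff[OF J(2) J'(2)] by (simp add: T.diff)
  ultimately have "\<forall>y\<in>Y. c y = 0"
    using Y by (simp add: image_independent_mod_def)
  then have "J \<inter> Y = J' \<inter> Y"
    by (auto simp: c_def split: if_splits)
  with \<open>J - Y = J' - Y\<close> show "J = J'" by blast
qed

lemma card_subset_sums_in_span:
  assumes "Vector_Spaces.linear scale scale T" "finite X" "Y \<subseteq> X" "image_independent_mod scale T H Y"
  shows "card {J. J \<subseteq> X \<and> T (\<Sum>x\<in>J. x) \<in> span H} \<le> 2 ^ (card X - card Y)"
proof -
  let ?bad = "{J. J \<subseteq> X \<and> T (\<Sum>x\<in>J. x) \<in> span H}"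
  have "inj_on (\<lambda>J. J - Y) ?bad"
    using image_independent_mod_sum_inj[OF assms] by (intro inj_onI) auto
  then have "card ?bad = card ((\<lambda>J. J - Y) ` ?bad)" by (simp add: card_image)
  also have "\<dots> \<le> card (Pow (X - Y))"
    using \<open>finite X\<close> by (intro card_mono) auto
  also have "\<dots> = 2 ^ (card X - card Y)"
    using \<open>finite X\<close> \<open>Y \<subseteq> X\<close> by (simp add: card_Pow card_Diff_subset finite_subset)
  finally show ?thesis .
qed

lemma exists_image_not_in_span:
  assumes "finite F" "\<And>T. T \<in> F \<Longrightarrow> Vector_Spaces.linear scale scale T"
    "\<And>T. T \<in> F \<Longrightarrow> \<not> finite_rank scale T" "\<And>T. T \<in> F \<Longrightarrow> finite (H T)"
  shows "\<exists>v. \<forall>T\<in>F. T v \<notin> span (H T)"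
proof (cases "F = {}")
  case False
  define m where "m = card F"
  have "\<forall>T\<in>F. \<exists>Y. finite Y \<and> card Y = m \<and> image_independent_mod scale T (H T) Y"
    using assms(3,4) image_independent_mod_exists by blast
  then obtain Y where Y: "\<And>T. T \<in> F \<Longrightarrow> finite (Y T) \<and> card (Y T) = m \<and>
      image_independent_mod scale T (H T) (Y T)"
    by metis
  define X where "X = (\<Union>T\<in>F. Y T)"
  have "finite X" using Y \<open>finite F\<close> by (simp add: X_def)
  have YX: "Y T \<subseteq> X" if "T \<in> F" for T using that by (auto simp: X_def)
  obtain T0 where "T0 \<in> F" using False by blast
  have "m \<le> card X" using card_mono[OF \<open>finite X\<close> YX[OF \<open>T0 \<in> F\<close>]] Y[OF \<open>T0 \<in> F\<close>] by simp
  \<comment> \<open>Each \<open>T\<close> sends at most \<open>2 ^ (card X - m)\<close> of the \<open>2 ^ card X\<close> subset sums of \<open>X\<close> into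
    \<open>span (H T)\<close>, and \<open>m * 2 ^ (card X - m) < 2 ^ card X\<close>.\<close>
  define bad where "bad T = {J. J \<subseteq> X \<and> T (\<Sum>x\<in>J. x) \<in> span (H T)}" for T
  have card_bad: "card (bad T) \<le> 2 ^ (card X - m)" if "T \<in> F" for T
    using card_subset_sums_in_span[OF assms(2)[OF that] \<open>finite X\<close> YX[OF that]] Y[OF that]
    by (simp add: bad_def)
  have "card (\<Union>T\<in>F. bad T) \<le> (\<Sum>T\<in>F. card (bad T))" by (rule card_UN_le[OF \<open>finite F\<close>])
  also have "\<dots> \<le> m * 2 ^ (card X - m)"
    using sum_mono[of F "\<lambda>T. card (bad T)" "\<lambda>_. 2 ^ (card X - m)"] card_bad by (simp add: m_def)
  also have "\<dots> < 2 ^ m * 2 ^ (card X - m)" by simp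
  also have "\<dots> = card (Pow X)"
    using \<open>m \<le> card X\<close> \<open>finite X\<close> by (simp add: card_Pow flip: power_add)
  finally have "(\<Union>T\<in>F. bad T) \<noteq> Pow X" by auto
  moreover have "(\<Union>T\<in>F. bad T) \<subseteq> Pow X" by (auto simp: bad_def)
  ultimately obtain J where "J \<subseteq> X" "\<forall>T\<in>F. J \<notin> bad T" by blast
  then show ?thesis by (intro exI[of _ "\<Sum>x\<in>J. x"]) (auto simp: bad_def)
qed simp

lemma exists_not_in_span_preserving_injectivity:
  assumes "finite V" "finite F" "F \<noteq> {}" "\<And>T. T \<in> F \<Longrightarrow> Vector_Spaces.linear scale scale T"
    "\<And>T. T \<in> F \<Longrightarrow> \<not> finite_rank scale T"
    and inj: "\<And>T. T \<in> F \<Longrightarrow> inj_on T V \<and> independent (T ` V)"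
  shows "\<exists>v. v \<notin> span V \<and> (\<forall>T\<in>F. inj_on T (insert v V) \<and> independent (T ` insert v V))"
proof -
  have "\<exists>v. \<forall>T\<in>F. T v \<notin> span (T ` V)"
    using assms(1,2,4,5) by (intro exists_image_not_in_span) auto
  then obtain v where v: "\<forall>T\<in>F. T v \<notin> span (T ` V)" by blast
  obtain T0 where "T0 \<in> F" using \<open>F \<noteq> {}\<close> by blast
  have "v \<notin> span V"
  proof
    assume "v \<in> span V"
    interpret T0: Vector_Spaces.linear scale scale T0 by (rule assms(4)[OF \<open>T0 \<in> F\<close>])
    from \<open>v \<in> span V\<close> have "T0 v \<in> span (T0 ` V)" by (simp add: T0.span_image)
    with v \<open>T0 \<in> F\<close> show False by blast
  qed
  moreover have "inj_on T (insert v V) \<and> independent (T ` insert v V)" if "T \<in> F" for T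
  proof -
    have "T v \<notin> span (T ` V)" using v that by blast
    moreover from this have "T v \<notin> T ` V" using span_superset by blast
    ultimately show ?thesis
      using inj[OF that] unfolding inj_on_insert by (auto simp: independent_insertI)
  qed
  ultimately show ?thesis by blast
qed

end

section \<open>Perfect sets of maps sharing a subspace\<close>

context vector_space
begin

lemma independent_UN_mono:
  fixes A :: "nat \<Rightarrow> 'b set"
  assumes "mono A" "\<And>n. independent (A n)"
  shows "independent (\<Union>n. A n)"
proof (rule independent_Union_directed)
  fix c d assume "c \<in> range A" "d \<in> range A"
  then obtain m n where "c = A m" "d = A n" by blast
  with \<open>mono A\<close> show "c \<subseteq> d \<or> d \<subseteq> c"
    by (metis monoD nle_le)
qed (use assms(2) in blast)

lemma
  fixes vseq :: "nat \<Rightarrow> 'b"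
  assumes "\<And>n. vseq n \<notin> span (vseq ` {..<n})"
  shows independent_range_if_not_in_span_initial: "independent (range vseq)"
    and infinite_range_if_not_in_span_initial: "infinite (range vseq)"
proof -
  have "independent (vseq ` {..<n})" for n
  proof (induction n)
    case (Suc n)
    with assms[of n] show ?case by (simp add: lessThan_Suc independent_insertI)
  qed (simp add: independent_empty)
  moreover have "mono (\<lambda>n. vseq ` {..<n})"
    by (intro monoI image_mono) simp
  ultimately have "independent (\<Union>n. vseq ` {..<n})"
    by (intro independent_UN_mono)
  moreover have "(\<Union>n. vseq ` {..<n}) = range vseq"
    by (auto intro: lessI)
  ultimately show "independent (range vseq)" by simp
  have "vseq i \<noteq> vseq j" if "i < j" for i j
  proof
    assume "vseq i = vseq j"
    with \<open>i < j\<close> have "vseq j \<in> span (vseq ` {..<j})" by (metis imageI lessThan_iff span_base)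
    with assms[of j] show False by contradiction
  qed
  then have "inj vseq" by (rule linorder_injI)
  then show "infinite (range vseq)" by (rule range_inj_infinite)
qed

lemma inj_on_span_range_if_initial:
  fixes vseq :: "nat \<Rightarrow> 'b"
  assumes lin: "Vector_Spaces.linear scale scale T"
    and "\<And>n. inj_on T (vseq ` {..<n})" "\<And>n. independent (T ` vseq ` {..<n})"
  shows "inj_on T (span (range vseq))"
proof -
  interpret T: Vector_Spaces.linear scale scale T by (rule lin)
  have range_eq: "range vseq = (\<Union>n. vseq ` {..<n})" by (auto intro: lessI)
  have "independent (\<Union>n. T ` vseq ` {..<n})"
    using assms(3) by (intro independent_UN_mono monoI image_mono) simp_all
  then have "independent (T ` range vseq)" by (simp add: range_eq image_UN)
  moreover have "inj_on T (\<Union>n. vseq ` {..<n})"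
  proof (rule inj_on_UNION_chain)
    show "vseq ` {..<m} \<subseteq> vseq ` {..<n} \<or> vseq ` {..<n} \<subseteq> vseq ` {..<m}" for m n
      by (metis image_mono lessThan_subset_iff nle_le)
  qed (rule assms(2))
  then have "inj_on T (range vseq)" by (simp add: range_eq)
  ultimately show ?thesis by (rule T.inj_on_span_independent_image)
qed

lemma perfect_subset_annihilating_subspace:
  fixes \<phi> :: "(nat \<Rightarrow> 'c::countable) \<Rightarrow> 'b \<Rightarrow> 'b"
  assumes cont: "continuous_map pointwise_discrete_top pointwise_discrete_top \<phi>"
    and lin: "\<And>\<sigma>. Vector_Spaces.linear scale scale (\<phi> \<sigma>)"
    and S: "S \<subseteq> range \<phi>" "uncountable S" "\<And>T. T \<in> S \<Longrightarrow> finite_rank scale T"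
    and B: "independent B" "infinite B"
  obtains P V where "P \<noteq> {}" "perfect_in pointwise_discrete_top P" "P \<subseteq> range \<phi>"
    "subspace V" "\<exists>B\<subseteq>V. independent B \<and> infinite B" "\<forall>T\<in>P. V \<subseteq> {x. T x = 0}"
proof -
  define M where "M T V \<longleftrightarrow> (\<forall>x\<in>V. T x = 0)" for T :: "'b \<Rightarrow> 'b" and V
  have "\<exists>P vseq. P \<noteq> {} \<and> perfect_in pointwise_discrete_top P \<and> P \<subseteq> range \<phi> \<and>
      (\<forall>T\<in>P. \<forall>n. M T (vseq ` {..<n})) \<and> (\<forall>n::nat. vseq n \<notin> span (vseq ` {..<n}))"
  proof (rule perfect_subset_by_fusion[OF cont S(1,2)])
    show "\<exists>v. v \<notin> span V \<and> (\<forall>T\<in>F. M T (insert v V))"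
      if "finite V" "finite F" "F \<noteq> {}" "F \<subseteq> S" "\<forall>T\<in>F. M T V" for V F
    proof -
      have "\<exists>v. v \<notin> span V \<and> (\<forall>T\<in>F. T v = 0)"
        by (rule exists_not_in_span_in_common_kernel[OF that(1,2) _ _ B])
          (use that(4) S(1,3) lin in auto)
      with that(5) show ?thesis by (auto simp: M_def)
    qed
  qed (auto simp: M_def)
  then obtain P vseq where P: "P \<noteq> {}" "perfect_in pointwise_discrete_top P" "P \<subseteq> range \<phi>"
    and M: "\<forall>T\<in>P. \<forall>n. M T (vseq ` {..<n})" and N: "\<forall>n::nat. vseq n \<notin> span (vseq ` {..<n})"
    by (elim exE conjE)
  show ?thesis
  proof (rule that[OF P, of "span (range vseq)"])
    show "subspace (span (range vseq))" by simp
    show "\<exists>B\<subseteq>span (range vseq). independent B \<and> infinite B"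
      using N independent_range_if_not_in_span_initial infinite_range_if_not_in_span_initial
      by (intro exI[of _ "range vseq"]) (simp add: span_superset)
    show "\<forall>T\<in>P. span (range vseq) \<subseteq> {x. T x = 0}"
    proof (intro ballI subsetI CollectI)
      fix T x assume "T \<in> P" "x \<in> span (range vseq)"
      then interpret T: Vector_Spaces.linear scale scale T using P(3) lin by blast
      have "T y = 0" if "y \<in> range vseq" for y
        using M \<open>T \<in> P\<close> that by (auto simp: M_def)
      then show "T x = 0"
        using \<open>x \<in> span (range vseq)\<close> by (rule T.eq_0_on_span)
    qed
  qed
qed

lemma perfect_subset_injective_subspace:
  fixes \<phi> :: "(nat \<Rightarrow> 'c::countable) \<Rightarrow> 'b \<Rightarrow> 'b"
  assumes cont: "continuous_map pointwise_discrete_top pointwise_discrete_top \<phi>"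
    and lin: "\<And>\<sigma>. Vector_Spaces.linear scale scale (\<phi> \<sigma>)"
    and S: "S \<subseteq> range \<phi>" "uncountable S" "\<And>T. T \<in> S \<Longrightarrow> \<not> finite_rank scale T"
  obtains P V where "P \<noteq> {}" "perfect_in pointwise_discrete_top P" "P \<subseteq> range \<phi>"
    "subspace V" "\<exists>B\<subseteq>V. independent B \<and> infinite B" "\<forall>T\<in>P. inj_on T V"
proof -
  define M where "M T V \<longleftrightarrow> inj_on T V \<and> independent (T ` V)" for T :: "'b \<Rightarrow> 'b" and V
  have "\<exists>P vseq. P \<noteq> {} \<and> perfect_in pointwise_discrete_top P \<and> P \<subseteq> range \<phi> \<and>
      (\<forall>T\<in>P. \<forall>n. M T (vseq ` {..<n})) \<and> (\<forall>n::nat. vseq n \<notin> span (vseq ` {..<n}))"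
  proof (rule perfect_subset_by_fusion[OF cont S(1,2)])
    show "M T {}" for T by (simp add: M_def independent_empty)
    show "M \<tau> V" if "M T V" "\<forall>x\<in>V. \<tau> x = T x" for T \<tau> V
    proof -
      have "\<tau> ` V = T ` V" using that(2) by (intro image_cong) simp_all
      moreover have "inj_on \<tau> V = inj_on T V" by (rule inj_on_cong) (use that(2) in simp)
      ultimately show ?thesis using that(1) by (simp add: M_def)
    qed
    show "\<exists>v. v \<notin> span V \<and> (\<forall>T\<in>F. M T (insert v V))"
      if "finite V" "finite F" "F \<noteq> {}" "F \<subseteq> S" "\<forall>T\<in>F. M T V" for V F
      using exists_not_in_span_preserving_injectivity[OF that(1-3)] that(4,5) S(1,3) lin
      unfolding M_def by blast
  qed
  then obtain P vseq where P: "P \<noteq> {}" "perfect_in pointwise_discrete_top P" "P \<subseteq> range \<phi>"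
    and M: "\<forall>T\<in>P. \<forall>n. M T (vseq ` {..<n})" and N: "\<forall>n::nat. vseq n \<notin> span (vseq ` {..<n})"
    by (elim exE conjE)
  show ?thesis
  proof (rule that[OF P, of "span (range vseq)"])
    show "subspace (span (range vseq))" by simp
    show "\<exists>B\<subseteq>span (range vseq). independent B \<and> infinite B"
      using N independent_range_if_not_in_span_initial infinite_range_if_not_in_span_initial
      by (intro exI[of _ "range vseq"]) (simp add: span_superset)
    show "\<forall>T\<in>P. inj_on T (span (range vseq))"
      using M P(3) lin by (auto simp: M_def intro!: inj_on_span_range_if_initial)
  qed
qed

lemma perfect_subset_kernel_or_injective:
  fixes \<phi> :: "(nat \<Rightarrow> 'c::countable) \<Rightarrow> 'b \<Rightarrow> 'b"
  assumes cont: "continuous_map pointwise_discrete_top pointwise_discrete_top \<phi>"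
    and lin: "\<And>\<sigma>. Vector_Spaces.linear scale scale (\<phi> \<sigma>)"
    and "uncountable (range \<phi>)" and B: "independent B" "infinite B"
  obtains P V where "P \<noteq> {}" "perfect_in pointwise_discrete_top P" "P \<subseteq> range \<phi>"
    "subspace V" "\<exists>B\<subseteq>V. independent B \<and> infinite B"
    "(\<forall>T\<in>P. V \<subseteq> {x. T x = 0}) \<or> (\<forall>T\<in>P. inj_on T V)"
proof (cases "uncountable {T \<in> range \<phi>. finite_rank scale T}")
  case True
  have sub: "{T \<in> range \<phi>. finite_rank scale T} \<subseteq> range \<phi>" by blast
  have rank: "\<And>T. T \<in> {T \<in> range \<phi>. finite_rank scale T} \<Longrightarrow> finite_rank scale T" by simp
  obtain P V where P: "P \<noteq> {}" "perfect_in pointwise_discrete_top P" "P \<subseteq> range \<phi>"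
    "subspace V" "\<exists>B\<subseteq>V. independent B \<and> infinite B" "\<forall>T\<in>P. V \<subseteq> {x. T x = 0}"
    by (rule perfect_subset_annihilating_subspace[OF cont lin sub True rank B])
  show ?thesis by (rule that[OF P(1-5) disjI1[OF P(6)]])
next
  case False
  have unc: "uncountable {T \<in> range \<phi>. \<not> finite_rank scale T}"
  proof
    assume "countable {T \<in> range \<phi>. \<not> finite_rank scale T}"
    with False have "countable ({T \<in> range \<phi>. finite_rank scale T} \<union> {T \<in> range \<phi>. \<not> finite_rank scale T})"
      by simp
    also have "{T \<in> range \<phi>. finite_rank scale T} \<union> {T \<in> range \<phi>. \<not> finite_rank scale T} = range \<phi>"
      by blast
    finally show False using \<open>uncountable (range \<phi>)\<close> by contradiction
  qed
  have sub: "{T \<in> range \<phi>. \<not> finite_rank scale T} \<subseteq> range \<phi>" by blast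
  have rank: "\<And>T. T \<in> {T \<in> range \<phi>. \<not> finite_rank scale T} \<Longrightarrow> \<not> finite_rank scale T" by simp
  obtain P V where P: "P \<noteq> {}" "perfect_in pointwise_discrete_top P" "P \<subseteq> range \<phi>"
    "subspace V" "\<exists>B\<subseteq>V. independent B \<and> infinite B" "\<forall>T\<in>P. inj_on T V"
    by (rule perfect_subset_injective_subspace[OF cont lin sub unc rank])
  show ?thesis by (rule that[OF P(1-5) disjI2[OF P(6)]])
qed

end

theorem theorem2p1:
  fixes sc :: "'f::{field,countable} \<Rightarrow> 'e::{ab_group_add,countable} \<Rightarrow> 'e"
    and A :: "('e \<Rightarrow> 'e) set"
  assumes vs: "vector_space sc"
    and infdim: "\<exists>B. \<not> module.dependent sc B \<and> infinite B"
    and A_sub: "A \<subseteq> {T. Vector_Spaces.linear sc sc T}"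
    and A_an: "analytic_in (linmaps_top sc) A"
    and A_unc: "uncountable A"
  shows "\<exists>P V. P \<noteq> {} \<and> perfect_in (linmaps_top sc) P \<and> P \<subseteq> A \<and>
           module.subspace sc V \<and>
           (\<exists>B\<subseteq>V. \<not> module.dependent sc B \<and> infinite B) \<and>
           ((\<forall>T\<in>P. V \<subseteq> {x. T x = 0}) \<or> (\<forall>T\<in>P. inj_on T V))"
proof -
  interpret vector_space sc by (rule vs)
  obtain B where B: "independent B" "infinite B" using infdim by blast
  from A_unc have "A \<noteq> {}" by auto
  with A_an obtain \<phi> where \<phi>: "continuous_map baire_space (linmaps_top sc) \<phi>" "range \<phi> = A"
    unfolding analytic_in_def by blast
  then have cont: "continuous_map pointwise_discrete_top pointwise_discrete_top \<phi>"
    and lin: "\<And>\<sigma>. Vector_Spaces.linear sc sc (\<phi> \<sigma>)"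
    using A_sub by (auto simp: linmaps_top_def baire_space_def continuous_map_in_subtopology)
  from A_unc \<phi>(2) have "uncountable (range \<phi>)" by simp
  then obtain P V where P: "P \<noteq> {}" "perfect_in pointwise_discrete_top P" "P \<subseteq> range \<phi>"
    and V: "subspace V" "\<exists>B\<subseteq>V. independent B \<and> infinite B"
      "(\<forall>T\<in>P. V \<subseteq> {x. T x = 0}) \<or> (\<forall>T\<in>P. inj_on T V)"
    by (rule perfect_subset_kernel_or_injective[OF cont lin _ B])
  moreover have "perfect_in (linmaps_top sc) P"
    unfolding linmaps_top_def using P(2,3) \<phi>(2) A_sub by (intro perfect_in_subtopology) auto
  ultimately show ?thesis
    using V \<phi>(2) by (intro exI[of _ P] exI[of _ V]) simp
qed

end
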